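(* Let $\varphi,\psi$ be independent random variables uniform on $[0,\pi]$, and set $(\alpha,\beta)=(\varphi,\psi)$ if $\varphi+\psi<\pi$ and $(\alpha,\beta)=(\pi-\psi,\pi-\varphi)$ if $\varphi+\psi>\pi$. Let $T$ be the triangle with vertices $A=(0,0)$, $B=(1,0)$ and \[ C=\left(\frac{\tan\beta}{\tan\alpha+\tan\beta},\frac{\tan\alpha\tan\beta}{\tan\alpha+\tan\beta}\right), \] so that $T$ has interior angles $\alpha$ at $A$ and $\beta$ at $B$. Let $a=\|B-C\|$ and $b=\|A-C\|$. Then the joint density of $(a,b)$ is \[ k(x,y)=\begin{cases}\dfrac{2}{\pi^2 x y} & \text{if } |1-x|<y<1+x \text{ and } x>0,\\ 0 & \text{otherwise,}\end{cases} \] and $a$ has marginal density $\dfrac{2}{\pi^2}\dfrac{\ln(1+x)-\ln|1-x|}{x}$ for $x>0$.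
   Context: $\|\cdot\|$ is the Euclidean norm. $T$ is called a uniform triangle. *)

theory Defs
  imports "HOL-Probability.Probability"
begin

text \<open>Angles of the uniform triangle obtained from the two uniform angles phi, psi.
  The boundary case phi + psi = pi (a null event) is put in the second branch.\<close>
definition tri_angles :: "real \<Rightarrow> real \<Rightarrow> real \<times> real" where
  "tri_angles \<phi> \<psi> = (if \<phi> + \<psi> < pi then (\<phi>, \<psi>) else (pi - \<psi>, pi - \<phi>))"

definition tri_C :: "real \<Rightarrow> real \<Rightarrow> real \<times> real" where
  "tri_C \<alpha> \<beta> = (tan \<beta> / (tan \<alpha> + tan \<beta>), tan \<alpha> * tan \<beta> / (tan \<alpha> + tan \<beta>))"

definition side_a :: "real \<Rightarrow> real \<Rightarrow> real" where
  "side_a \<phi> \<psi> = dist ((1::real), (0::real)) (tri_C (fst (tri_angles \<phi> \<psi>)) (snd (tri_angles \<phi> \<psi>)))"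

definition side_b :: "real \<Rightarrow> real \<Rightarrow> real" where
  "side_b \<phi> \<psi> = dist ((0::real), (0::real)) (tri_C (fst (tri_angles \<phi> \<psi>)) (snd (tri_angles \<phi> \<psi>)))"

definition joint_density :: "real \<Rightarrow> real \<Rightarrow> real" where
  "joint_density x y = (if x > 0 \<and> \<bar>1 - x\<bar> < y \<and> y < 1 + x then 2 / (pi\<^sup>2 * x * y) else 0)"

definition marginal_density_a :: "real \<Rightarrow> real" where
  "marginal_density_a x = (if x > 0 then 2 / pi\<^sup>2 * ((ln (1 + x) - ln \<bar>1 - x\<bar>) / x) else 0)"

end

(*
  The angle pair (phi, psi) is uniform on the square [0, pi]^2, and tri_angles folds the half
  phi + psi > pi onto the half phi + psi < pi by the measure-preserving reflection
  (phi, psi) |-> (pi - psi, pi - phi). Hence the angles (alpha, beta) have density 2 / pi^2 on the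
  triangle alpha, beta > 0, alpha + beta < pi. By the law of sines b = sin beta / sin (alpha + beta),
  and by the law of cosines a^2 = 1 + b^2 - 2 b cos alpha. Substituting first beta |-> b, with
  db / dbeta = a^2 / sin alpha, and then alpha |-> a for fixed b, with da / dalpha = b sin alpha / a,
  turns dalpha dbeta into da db / (a b) on the pairs satisfying |1 - b| < a < 1 + b. Integrating
  1 / y over |1 - x| < y < 1 + x gives the marginal density of a.
*)

theory Submission
  imports Defs
begin

section \<open>Substitution on open intervals\<close>

lemma greaterThanLessThan_eq_UN_atLeastAtMost:
  fixes c d :: real
  assumes "c < d"
  obtains a b :: "nat \<Rightarrow> real"
  where "\<And>n. c < a n" "\<And>n. a n < b n" "\<And>n. b n < d"
    and "incseq (\<lambda>n. {a n..b n})" and "(\<Union>n. {a n..b n}) = {c<..<d}"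
proof
  define e where "e n = (d - c) / (real n + 3)" for n :: nat
  have e_pos: "0 < e n" for n
    using assms by (simp add: e_def)
  have e_small: "2 * e n < d - c" for n
  proof -
    have "2 * e n = (d - c) * (2 / (real n + 3))"
      by (simp add: e_def)
    also have "\<dots> < (d - c) * 1"
      using assms by (intro mult_strict_left_mono) auto
    finally show ?thesis by simp
  qed
  show "c < c + e n" "c + e n < d - e n" "d - e n < d" for n
    using e_pos[of n] e_small[of n] by auto
  show "incseq (\<lambda>n. {c + e n..d - e n})"
  proof (rule incseq_SucI)
    fix n
    have "e (Suc n) \<le> e n"
      using assms by (auto simp: e_def intro!: divide_left_mono)
    then show "{c + e n..d - e n} \<subseteq> {c + e (Suc n)..d - e (Suc n)}" by auto
  qed
  show "(\<Union>n. {c + e n..d - e n}) = {c<..<d}"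
  proof (intro equalityI subsetI)
    fix x assume "x \<in> {c<..<d}"
    define m where "m = min (x - c) (d - x)"
    have m: "0 < m"
      using \<open>x \<in> {c<..<d}\<close> by (simp add: m_def)
    obtain n :: nat where "(d - c) / m < real n"
      using reals_Archimedean2 by blast
    then have "d - c < real n * m"
      using m by (simp add: pos_divide_less_eq)
    also have "\<dots> < (real n + 3) * m"
      using m by (intro mult_strict_right_mono) auto
    finally have "e n < m"
      by (simp add: e_def divide_less_eq mult.commute)
    then have "x \<in> {c + e n..d - e n}"
      by (auto simp: m_def)
    then show "x \<in> (\<Union>n. {c + e n..d - e n})" by auto
  next
    fix x assume "x \<in> (\<Union>n. {c + e n..d - e n})"
    then obtain n where "x \<in> {c + e n..d - e n}" by blast
    with e_pos[of n] show "x \<in> {c<..<d}" by auto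
  qed
qed

lemma image_atLeastAtMost_mono_continuous:
  fixes g :: "real \<Rightarrow> real"
  assumes "a \<le> b" and cont: "continuous_on {a..b} g"
    and mono: "\<And>x y. a \<le> x \<Longrightarrow> x \<le> y \<Longrightarrow> y \<le> b \<Longrightarrow> g x \<le> g y"
  shows "g ` {a..b} = {g a..g b}"
proof
  show "g ` {a..b} \<subseteq> {g a..g b}"
    using mono by auto
  show "{g a..g b} \<subseteq> g ` {a..b}"
    using IVT'[of g a _ b] assms by (force simp: image_iff)
qed

lemma borel_measurable_substitution_integrand:
  fixes f :: "real \<Rightarrow> ennreal" and g g' :: "real \<Rightarrow> real"
  assumes [measurable]: "f \<in> borel_measurable borel"
    and "continuous_on {c<..<d} g" "continuous_on {c<..<d} g'"
  shows "(\<lambda>x. f (g x) * ennreal (g' x) * indicator {c<..<d} x) \<in> borel_measurable borel"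
proof -
  have [measurable]: "(\<lambda>x. if x \<in> {c<..<d} then g x else 0) \<in> borel_measurable borel"
    using assms(2) by (intro borel_measurable_continuous_on_if borel_open) auto
  have [measurable]: "(\<lambda>x. if x \<in> {c<..<d} then g' x else 0) \<in> borel_measurable borel"
    using assms(3) by (intro borel_measurable_continuous_on_if borel_open) auto
  have "(\<lambda>x. f (if x \<in> {c<..<d} then g x else 0) * ennreal (if x \<in> {c<..<d} then g' x else 0)
      * indicator {c<..<d} x) \<in> borel_measurable borel"
    by measurable
  then show ?thesis
    by (rule measurable_cong[THEN iffD1, rotated]) (simp add: indicator_def)
qed

text \<open>\<open>nn_integral_substitution_aux\<close> only covers compact intervals: exhaust \<open>{c<..<d}\<close> by an
  increasing sequence of them and pass to the limit in the measures.\<close>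
lemma nn_integral_substitution_open:
  fixes f :: "real \<Rightarrow> ennreal" and g g' :: "real \<Rightarrow> real"
  assumes f[measurable]: "f \<in> borel_measurable borel" and "c < d"
    and g: "\<And>x. x \<in> {c<..<d} \<Longrightarrow> (g has_real_derivative g' x) (at x)"
    and g'_cont: "continuous_on {c<..<d} g'"
    and g'_nonneg: "\<And>x. x \<in> {c<..<d} \<Longrightarrow> 0 \<le> g' x"
  shows "(\<integral>\<^sup>+x. f (g x) * ennreal (g' x) * indicator {c<..<d} x \<partial>lborel)
       = (\<integral>\<^sup>+y. f y * indicator (g ` {c<..<d}) y \<partial>lborel)"
proof -
  obtain a b where ab: "\<And>n. c < a n" "\<And>n. a n < b n" "\<And>n. b n < d"
    and inc: "incseq (\<lambda>n. {a n..b n})" and U: "(\<Union>n. {a n..b n}) = {c<..<d}"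
    using greaterThanLessThan_eq_UN_atLeastAtMost[OF \<open>c < d\<close>] by blast
  have g_cont: "continuous_on {c<..<d} g"
    using g by (rule has_real_derivative_imp_continuous_on)
  have g_mono: "g x \<le> g y" if "c < x" "x \<le> y" "y < d" for x y
    using that by (intro deriv_nonneg_imp_mono[of x y g g']) (auto intro!: g g'_nonneg)
  have img: "g ` {a n..b n} = {g (a n)..g (b n)}" for n
    using ab[of n] g_mono
    by (intro image_atLeastAtMost_mono_continuous continuous_on_subset[OF g_cont]) auto
  define h where "h x = f (g x) * ennreal (g' x) * indicator {c<..<d} x" for x
  have [measurable]: "h \<in> borel_measurable borel"
    unfolding h_def[abs_def] using g_cont g'_cont by (rule borel_measurable_substitution_integrand[OF f])
  have "(\<integral>\<^sup>+x. f (g x) * ennreal (g' x) * indicator {c<..<d} x \<partial>lborel)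
      = emeasure (density lborel h) (\<Union>n. {a n..b n})"
    by (auto simp: U emeasure_density h_def indicator_def intro!: nn_integral_cong)
  also have "\<dots> = (SUP n. emeasure (density lborel h) {a n..b n})"
    using inc by (intro SUP_emeasure_incseq[symmetric]) auto
  also have "\<dots> = (SUP n. emeasure (density lborel f) (g ` {a n..b n}))"
  proof (intro SUP_cong refl)
    fix n
    have "emeasure (density lborel h) {a n..b n}
        = (\<integral>\<^sup>+x. f (g x) * ennreal (g' x) * indicator {a n..b n} x \<partial>lborel)"
      using ab[of n] by (auto simp: emeasure_density h_def indicator_def intro!: nn_integral_cong)
    also have "\<dots> = (\<integral>\<^sup>+y. f y * indicator {g (a n)..g (b n)} y \<partial>lborel)"
      using ab[of n]
      by (intro nn_integral_substitution_aux[symmetric] f)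
         (auto intro!: g g'_nonneg continuous_on_subset[OF g'_cont])
    finally show "emeasure (density lborel h) {a n..b n} = emeasure (density lborel f) (g ` {a n..b n})"
      by (simp add: img emeasure_density)
  qed
  also have "\<dots> = emeasure (density lborel f) (\<Union>n. g ` {a n..b n})"
  proof (rule SUP_emeasure_incseq)
    show "incseq (\<lambda>n. g ` {a n..b n})"
      using inc by (simp add: incseq_def image_mono)
  qed (auto simp: img)
  also have "\<dots> = (\<integral>\<^sup>+y. f y * indicator (g ` {c<..<d}) y \<partial>lborel)"
    by (subst emeasure_density) (auto simp: img U[symmetric] image_UN)
  finally show ?thesis .
qed

section \<open>Side lengths of the triangle\<close>

definition tri_sides :: "real \<Rightarrow> real \<Rightarrow> real \<times> real" where
  "tri_sides \<alpha> \<beta> = (dist (1::real, 0::real) (tri_C \<alpha> \<beta>), dist (0::real, 0::real) (tri_C \<alpha> \<beta>))"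

lemma side_a_side_b_eq_tri_sides:
  "(side_a \<phi> \<psi>, side_b \<phi> \<psi>) = case_prod tri_sides (tri_angles \<phi> \<psi>)"
  by (simp add: side_a_def side_b_def tri_sides_def case_prod_beta)

lemma borel_measurable_tan[measurable]: "(tan :: real \<Rightarrow> real) \<in> borel_measurable borel"
  unfolding tan_def by measurable

lemma tri_sides_measurable[measurable]:
  "case_prod tri_sides \<in> (lborel \<Otimes>\<^sub>M lborel) \<rightarrow>\<^sub>M (lborel \<Otimes>\<^sub>M lborel)"
  unfolding tri_sides_def tri_C_def case_prod_beta by measurable

text \<open>Right angles are excluded because \<open>tan (pi / 2) = 0\<close> in Isabelle, so \<open>tri_C\<close> is junk there.\<close>
lemma tri_sides_law_of_sines:
  fixes \<alpha> \<beta> :: real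
  assumes "0 < \<alpha>" "0 < \<beta>" "\<alpha> + \<beta> < pi" "\<alpha> \<noteq> pi / 2" "\<beta> \<noteq> pi / 2"
  shows "tri_sides \<alpha> \<beta> = (sin \<alpha> / sin (\<alpha> + \<beta>), sin \<beta> / sin (\<alpha> + \<beta>))"
proof -
  have cos_nonzero: "cos t \<noteq> 0" if "0 < t" "t < pi" "t \<noteq> pi / 2" for t
    using that cos_inj_pi[of t "pi / 2"] by auto
  have "cos \<alpha> \<noteq> 0" "cos \<beta> \<noteq> 0"
    using assms cos_nonzero[of \<alpha>] cos_nonzero[of \<beta>] by auto
  define s where "s = sin (\<alpha> + \<beta>)"
  have s: "0 < s" "0 < sin \<alpha>" "0 < sin \<beta>"
    unfolding s_def using assms by (auto intro!: sin_gt_zero)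
  have tan_sum: "tan \<alpha> + tan \<beta> = s / (cos \<alpha> * cos \<beta>)"
    unfolding s_def using \<open>cos \<alpha> \<noteq> 0\<close> \<open>cos \<beta> \<noteq> 0\<close> by (simp add: add_tan_eq)
  have C: "tri_C \<alpha> \<beta> = (sin \<beta> * cos \<alpha> / s, sin \<alpha> * sin \<beta> / s)"
    unfolding tri_C_def using \<open>cos \<alpha> \<noteq> 0\<close> \<open>cos \<beta> \<noteq> 0\<close> s by (simp add: tan_sum tan_def field_simps s_def sin_add)
  have "1 - sin \<beta> * cos \<alpha> / s = sin \<alpha> * cos \<beta> / s"
    using s by (simp add: s_def sin_add field_simps)
  then have "dist (1::real, 0::real) (tri_C \<alpha> \<beta>)
      = sqrt ((sin \<alpha> * cos \<beta> / s)\<^sup>2 + (sin \<alpha> * sin \<beta> / s)\<^sup>2)"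
    by (simp add: C dist_Pair_Pair dist_real_def power2_commute power_divide power2_abs)
  also have "\<dots> = sin \<alpha> / s"
    using s by (simp add: power_divide power_mult_distrib real_sqrt_divide flip: add_divide_distrib distrib_left)
  finally have a: "dist (1::real, 0::real) (tri_C \<alpha> \<beta>) = sin \<alpha> / s" .
  have "dist (0::real, 0::real) (tri_C \<alpha> \<beta>)
      = sqrt ((sin \<beta> * cos \<alpha> / s)\<^sup>2 + (sin \<beta> * sin \<alpha> / s)\<^sup>2)"
    by (simp add: C dist_Pair_Pair dist_real_def mult.commute power_divide power2_abs)
  also have "\<dots> = sin \<beta> / s"
    using s by (simp add: power_divide power_mult_distrib real_sqrt_divide flip: add_divide_distrib distrib_left)
  finally show ?thesis
    using a by (simp add: tri_sides_def s_def)
qed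

definition third_side :: "real \<Rightarrow> real \<Rightarrow> real" where
  "third_side \<alpha> b = sqrt (1 + b\<^sup>2 - 2 * b * cos \<alpha>)"

lemma third_side_measurable[measurable]:
  "case_prod third_side \<in> borel_measurable (lborel \<Otimes>\<^sub>M lborel)"
  unfolding third_side_def case_prod_beta by measurable

lemma third_side_radicand_pos:
  fixes \<alpha> b :: real
  assumes "0 < \<alpha>" "\<alpha> < pi"
  shows "0 < 1 + b\<^sup>2 - 2 * b * cos \<alpha>"
proof -
  have "1 + b\<^sup>2 - 2 * b * cos \<alpha> = (b - cos \<alpha>)\<^sup>2 + (sin \<alpha>)\<^sup>2"
    by (simp add: power2_eq_square sin_squared_eq algebra_simps)
  moreover have "0 < sin \<alpha>"
    using assms by (rule sin_gt_zero)
  ultimately show ?thesis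
    by (simp add: add_nonneg_pos)
qed

lemma third_side_pos:
  assumes "0 < \<alpha>" "\<alpha> < pi"
  shows "0 < third_side \<alpha> b"
  using third_side_radicand_pos[OF assms] by (simp add: third_side_def)

lemma third_side_law_of_sines:
  fixes \<alpha> \<beta> :: real
  assumes "0 < \<alpha>" "0 < \<beta>" "\<alpha> + \<beta> < pi"
  shows "third_side \<alpha> (sin \<beta> / sin (\<alpha> + \<beta>)) = sin \<alpha> / sin (\<alpha> + \<beta>)"
proof -
  define s where "s = sin (\<alpha> + \<beta>)"
  have s: "0 < s" "0 < sin \<alpha>"
    unfolding s_def using assms by (auto intro!: sin_gt_zero)
  have "s\<^sup>2 + (sin \<beta>)\<^sup>2 - 2 * sin \<beta> * s * cos \<alpha>
      = (s - sin \<beta> * cos \<alpha>)\<^sup>2 + (sin \<beta>)\<^sup>2 * (1 - (cos \<alpha>)\<^sup>2)"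
    by (simp add: power2_eq_square algebra_simps)
  also have "\<dots> = (sin \<alpha> * cos \<beta>)\<^sup>2 + (sin \<beta>)\<^sup>2 * (sin \<alpha>)\<^sup>2"
    by (simp add: s_def sin_add sin_squared_eq)
  also have "\<dots> = (sin \<alpha>)\<^sup>2"
    by (simp add: power_mult_distrib cos_squared_eq algebra_simps)
  finally have "1 + (sin \<beta> / s)\<^sup>2 - 2 * (sin \<beta> / s) * cos \<alpha> = (sin \<alpha> / s)\<^sup>2"
    using s by (simp add: field_simps power2_eq_square)
  then show ?thesis
    using s by (simp add: third_side_def s_def)
qed

lemma tri_sides_eq_third_side:
  fixes \<alpha> \<beta> :: real
  assumes "0 < \<alpha>" "0 < \<beta>" "\<alpha> + \<beta> < pi" "\<alpha> \<noteq> pi / 2" "\<beta> \<noteq> pi / 2"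
  defines "b \<equiv> sin \<beta> / sin (\<alpha> + \<beta>)"
  shows "tri_sides \<alpha> \<beta> = (third_side \<alpha> b, b)"
  using tri_sides_law_of_sines[OF assms(1-5)] third_side_law_of_sines[OF assms(1-3)]
  by (simp add: b_def)

lemma has_real_derivative_third_side:
  fixes \<alpha> b :: real
  assumes "0 < \<alpha>" "\<alpha> < pi"
  shows "((\<lambda>t. third_side t b) has_real_derivative b * sin \<alpha> / third_side \<alpha> b) (at \<alpha>)"
  unfolding third_side_def using third_side_radicand_pos[OF assms, of b]
  by (auto intro!: derivative_eq_intros simp: field_simps)

lemma image_third_side:
  fixes b :: real
  assumes b: "0 < b"
  shows "(\<lambda>t. third_side t b) ` {0<..<pi} = {\<bar>1 - b\<bar><..<1 + b}"
proof
  show "(\<lambda>t. third_side t b) ` {0<..<pi} \<subseteq> {\<bar>1 - b\<bar><..<1 + b}"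
  proof
    fix y assume "y \<in> (\<lambda>t. third_side t b) ` {0<..<pi}"
    then obtain t where t: "0 < t" "t < pi" "y = third_side t b" by auto
    have "cos t < 1" "-1 < cos t"
      using t cos_monotone_0_pi[of 0 t] cos_monotone_0_pi[of t pi] by auto
    then have "(1 - b)\<^sup>2 < 1 + b\<^sup>2 - 2 * b * cos t" "1 + b\<^sup>2 - 2 * b * cos t < (1 + b)\<^sup>2"
      using b mult_pos_pos[of b "1 + cos t"] by (simp_all add: power2_eq_square algebra_simps)
    then have "sqrt ((1 - b)\<^sup>2) < y" "y < sqrt ((1 + b)\<^sup>2)"
      unfolding t(3) third_side_def by (simp_all del: real_sqrt_abs)
    then show "y \<in> {\<bar>1 - b\<bar><..<1 + b}"
      using b by simp
  qed
  show "{\<bar>1 - b\<bar><..<1 + b} \<subseteq> (\<lambda>t. third_side t b) ` {0<..<pi}"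
  proof
    fix a assume a: "a \<in> {\<bar>1 - b\<bar><..<1 + b}"
    then have a0: "0 < a" by auto
    define z where "z = (1 + b\<^sup>2 - a\<^sup>2) / (2 * b)"
    have "\<bar>1 - b\<bar>\<^sup>2 < a\<^sup>2"
      using a by (intro power_strict_mono) auto
    moreover have "a\<^sup>2 < (1 + b)\<^sup>2"
      using a a0 by (intro power_strict_mono) auto
    ultimately have z: "-1 < z" "z < 1"
      unfolding z_def using b by (simp_all add: field_simps power2_eq_square)
    have "third_side (arccos z) b = a"
      using b a0 z by (simp add: third_side_def z_def field_simps)
    moreover have "arccos z \<in> {0<..<pi}"
      using arccos_lt_bounded[of z] z by auto
    ultimately show "a \<in> (\<lambda>t. third_side t b) ` {0<..<pi}"
      by (intro image_eqI[of _ _ "arccos z"]) auto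
  qed
qed

lemma has_real_derivative_sin_ratio:
  fixes \<alpha> \<beta> :: real
  assumes "sin (\<alpha> + \<beta>) \<noteq> 0"
  shows "((\<lambda>t. sin t / sin (\<alpha> + t)) has_real_derivative sin \<alpha> / (sin (\<alpha> + \<beta>))\<^sup>2) (at \<beta>)"
proof -
  have "cos \<beta> * sin (\<alpha> + \<beta>) - sin \<beta> * cos (\<alpha> + \<beta>) = sin \<alpha>"
    using sin_diff[of "\<alpha> + \<beta>" \<beta>] by (simp add: algebra_simps)
  then show ?thesis
    using assms by (auto intro!: derivative_eq_intros simp: power2_eq_square)
qed

lemma image_sin_ratio:
  fixes \<alpha> :: real
  assumes "0 < \<alpha>" "\<alpha> < pi"
  shows "(\<lambda>t. sin t / sin (\<alpha> + t)) ` {0<..<pi - \<alpha>} = {0<..}"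
proof
  show "(\<lambda>t. sin t / sin (\<alpha> + t)) ` {0<..<pi - \<alpha>} \<subseteq> {0<..}"
    using assms by (auto intro!: divide_pos_pos sin_gt_zero)
  show "{0<..} \<subseteq> (\<lambda>t. sin t / sin (\<alpha> + t)) ` {0<..<pi - \<alpha>}"
  proof
    fix b :: real assume "b \<in> {0<..}"
    then have b: "0 < b" by simp
    have sa: "0 < sin \<alpha>"
      using assms by (rule sin_gt_zero)
    define q where "q = (1 - b * cos \<alpha>) / (b * sin \<alpha>)"
    define t where "t = pi / 2 - arctan q"
    have t: "0 < t" "t < pi"
      unfolding t_def using arctan_bounded[of q] by auto
    have r: "0 < sqrt (1 + q\<^sup>2)"
      by (simp add: add_pos_nonneg)
    have "sin (\<alpha> + t) = (sin \<alpha> * q + cos \<alpha>) / sqrt (1 + q\<^sup>2)"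
      by (simp add: t_def sin_add sin_diff cos_diff sin_arctan cos_arctan add_divide_distrib)
    also have "sin \<alpha> * q + cos \<alpha> = 1 / b"
      unfolding q_def using b sa by (simp add: field_simps)
    finally have sin_sum: "sin (\<alpha> + t) = 1 / (b * sqrt (1 + q\<^sup>2))"
      by simp
    have "sin t = 1 / sqrt (1 + q\<^sup>2)"
      by (simp add: t_def sin_diff cos_arctan)
    then have "sin t / sin (\<alpha> + t) = b"
      using b r by (simp add: sin_sum)
    moreover have "\<alpha> + t < pi"
    proof (rule ccontr)
      assume "\<not> \<alpha> + t < pi"
      then have "sin (\<alpha> + t) \<le> 0"
        using assms t by (intro sin_le_zero) auto
      with sin_sum mult_pos_pos[OF b r] show False by simp
    qed
    ultimately show "b \<in> (\<lambda>t. sin t / sin (\<alpha> + t)) ` {0<..<pi - \<alpha>}"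
      using t by (intro image_eqI[of _ _ t]) auto
  qed
qed

section \<open>Densities of the angles and the sides\<close>

lemma distributed_comp_density:
  assumes X: "distributed M N X f" and T[measurable]: "T \<in> N \<rightarrow>\<^sub>M K"
    and g[measurable]: "g \<in> borel_measurable K"
    and eq: "\<And>A. A \<in> sets K \<Longrightarrow>
      (\<integral>\<^sup>+x. f x * indicator A (T x) \<partial>N) = (\<integral>\<^sup>+y. g y * indicator A y \<partial>K)"
  shows "distributed M K (\<lambda>\<omega>. T (X \<omega>)) g"
proof -
  note X[THEN distributed_measurable, measurable]
  have "distr M K (\<lambda>\<omega>. T (X \<omega>)) = density K g"
  proof (rule measure_eqI)
    fix A assume A: "A \<in> sets (distr M K (\<lambda>\<omega>. T (X \<omega>)))"
    then have [measurable]: "A \<in> sets K" by simp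
    have "emeasure (distr M K (\<lambda>\<omega>. T (X \<omega>))) A = (\<integral>\<^sup>+\<omega>. indicator A (T (X \<omega>)) \<partial>M)"
      using A by (simp add: nn_integral_distr flip: nn_integral_indicator)
    also have "\<dots> = (\<integral>\<^sup>+x. f x * indicator A (T x) \<partial>N)"
      by (rule distributed_nn_integral[OF X, symmetric]) measurable
    also have "\<dots> = emeasure (density K g) A"
      by (simp add: eq emeasure_density)
    finally show "emeasure (distr M K (\<lambda>\<omega>. T (X \<omega>))) A = emeasure (density K g) A" .
  qed simp
  then show ?thesis
    unfolding distributed_def by simp
qed

definition triangle_angles :: "(real \<times> real) set" where
  "triangle_angles = {(\<alpha>, \<beta>). 0 < \<alpha> \<and> 0 < \<beta> \<and> \<alpha> + \<beta> < pi}"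

definition angle_side_density :: "real \<Rightarrow> real \<Rightarrow> real" where
  "angle_side_density \<alpha> b =
    (if 0 < \<alpha> \<and> \<alpha> < pi \<and> 0 < b then sin \<alpha> / (third_side \<alpha> b)\<^sup>2 else 0)"

definition sides_density :: "real \<Rightarrow> real \<Rightarrow> real" where
  "sides_density a b = (if 0 < b \<and> \<bar>1 - b\<bar> < a \<and> a < 1 + b then 1 / (a * b) else 0)"

lemma triangle_angles_measurable[measurable]: "triangle_angles \<in> sets (lborel \<Otimes>\<^sub>M lborel)"
proof -
  have "{p \<in> space (lborel \<Otimes>\<^sub>M lborel). 0 < fst p \<and> 0 < snd p \<and> fst p + snd p < pi}
      \<in> sets (lborel \<Otimes>\<^sub>M lborel)"
    by measurable
  moreover have "triangle_angles = {p. 0 < fst p \<and> 0 < snd p \<and> fst p + snd p < pi}"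
    by (auto simp: triangle_angles_def)
  ultimately show ?thesis
    by (simp add: space_pair_measure)
qed

lemma angle_side_density_measurable[measurable]:
  "case_prod angle_side_density \<in> borel_measurable (lborel \<Otimes>\<^sub>M lborel)"
  unfolding angle_side_density_def case_prod_beta third_side_def by measurable

lemma sides_density_measurable[measurable]:
  "case_prod sides_density \<in> borel_measurable (lborel \<Otimes>\<^sub>M lborel)"
  unfolding sides_density_def case_prod_beta by measurable

lemma ennreal_mult_eq_one:
  fixes a b :: real
  assumes "a * b = 1" "0 \<le> b"
  shows "ennreal a * ennreal b = 1"
  using assms by (simp flip: ennreal_mult'')

lemma angle_side_density_sin_ratio:
  fixes \<alpha> \<beta> :: real
  assumes "0 < \<alpha>" "0 < \<beta>" "\<alpha> + \<beta> < pi"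
  shows "ennreal (angle_side_density \<alpha> (sin \<beta> / sin (\<alpha> + \<beta>))) * ennreal (sin \<alpha> / (sin (\<alpha> + \<beta>))\<^sup>2) = 1"
proof (rule ennreal_mult_eq_one)
  have "0 < sin (\<alpha> + \<beta>)" "0 < sin \<alpha>" "0 < sin \<beta>"
    using assms by (auto intro!: sin_gt_zero)
  then show "angle_side_density \<alpha> (sin \<beta> / sin (\<alpha> + \<beta>)) * (sin \<alpha> / (sin (\<alpha> + \<beta>))\<^sup>2) = 1"
    "0 \<le> sin \<alpha> / (sin (\<alpha> + \<beta>))\<^sup>2"
    using assms by (simp_all add: angle_side_density_def third_side_law_of_sines power_divide power2_eq_square)
qed

lemma sides_density_third_side:
  fixes t b :: real
  assumes "0 < t" "t < pi" "0 < b"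
  shows "ennreal (sides_density (third_side t b) b) * ennreal (b * sin t / third_side t b)
    = ennreal (angle_side_density t b)"
proof -
  have "third_side t b \<in> (\<lambda>t. third_side t b) ` {0<..<pi}"
    using assms by simp
  then have "\<bar>1 - b\<bar> < third_side t b" "third_side t b < 1 + b"
    using image_third_side[OF assms(3)] by auto
  moreover have "0 < third_side t b" "0 \<le> sin t"
    using assms by (simp_all add: third_side_pos sin_ge_zero)
  ultimately show ?thesis
    using assms by (simp add: sides_density_def angle_side_density_def power2_eq_square flip: ennreal_mult'')
qed

lemma nn_integral_tri_sides_snd:
  fixes u :: "real \<times> real \<Rightarrow> ennreal"
  assumes u[measurable]: "u \<in> borel_measurable (lborel \<Otimes>\<^sub>M lborel)" and "\<alpha> \<noteq> pi / 2"
  shows "(\<integral>\<^sup>+\<beta>. indicator triangle_angles (\<alpha>, \<beta>) * u (tri_sides \<alpha> \<beta>) \<partial>lborel)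
       = (\<integral>\<^sup>+b. ennreal (angle_side_density \<alpha> b) * u (third_side \<alpha> b, b) \<partial>lborel)"
proof (cases "0 < \<alpha> \<and> \<alpha> < pi")
  case False
  then have "indicator triangle_angles (\<alpha>, \<beta>) = (0::ennreal)" "angle_side_density \<alpha> b = 0" for \<beta> b
    by (auto simp: triangle_angles_def angle_side_density_def)
  then show ?thesis
    by simp
next
  case True
  define g where "g t = sin t / sin (\<alpha> + t)" for t
  define f where "f b = u (third_side \<alpha> b, b) * ennreal (angle_side_density \<alpha> b)" for b
  have [measurable]: "f \<in> borel_measurable borel"
    unfolding f_def angle_side_density_def third_side_def by measurable
  have sin_pos: "0 < sin (\<alpha> + t)" if "t \<in> {0<..<pi - \<alpha>}" for t
    using that True by (intro sin_gt_zero) auto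
  have "AE \<beta> in lborel. indicator triangle_angles (\<alpha>, \<beta>) * u (tri_sides \<alpha> \<beta>)
      = f (g \<beta>) * ennreal (sin \<alpha> / (sin (\<alpha> + \<beta>))\<^sup>2) * indicator {0<..<pi - \<alpha>} \<beta>"
    using AE_lborel_singleton[of "pi / 2"]
  proof eventually_elim
    case (elim \<beta>)
    show ?case
    proof (cases "\<beta> \<in> {0<..<pi - \<alpha>}")
      case \<beta>: True
      then have "tri_sides \<alpha> \<beta> = (third_side \<alpha> (g \<beta>), g \<beta>)"
        unfolding g_def using True elim \<open>\<alpha> \<noteq> pi / 2\<close> by (intro tri_sides_eq_third_side) auto
      moreover have "ennreal (angle_side_density \<alpha> (g \<beta>)) * ennreal (sin \<alpha> / (sin (\<alpha> + \<beta>))\<^sup>2) = 1"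
        unfolding g_def using True \<beta> by (intro angle_side_density_sin_ratio) auto
      ultimately show ?thesis
        using True \<beta> by (simp add: f_def triangle_angles_def mult.assoc)
    qed (auto simp: triangle_angles_def)
  qed
  then have "(\<integral>\<^sup>+\<beta>. indicator triangle_angles (\<alpha>, \<beta>) * u (tri_sides \<alpha> \<beta>) \<partial>lborel)
      = (\<integral>\<^sup>+\<beta>. f (g \<beta>) * ennreal (sin \<alpha> / (sin (\<alpha> + \<beta>))\<^sup>2) * indicator {0<..<pi - \<alpha>} \<beta> \<partial>lborel)"
    by (rule nn_integral_cong_AE)
  also have "\<dots> = (\<integral>\<^sup>+b. f b * indicator (g ` {0<..<pi - \<alpha>}) b \<partial>lborel)"
  proof (rule nn_integral_substitution_open)
    show "(g has_real_derivative sin \<alpha> / (sin (\<alpha> + t))\<^sup>2) (at t)" if "t \<in> {0<..<pi - \<alpha>}" for t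
      unfolding g_def using has_real_derivative_sin_ratio sin_pos[OF that] by simp
    show "continuous_on {0<..<pi - \<alpha>} (\<lambda>t. sin \<alpha> / (sin (\<alpha> + t))\<^sup>2)"
      using sin_pos by (intro continuous_intros) force
  qed (use True sin_ge_zero[of \<alpha>] in auto)
  also have "\<dots> = (\<integral>\<^sup>+b. f b \<partial>lborel)"
    using True by (intro nn_integral_cong) (auto simp: g_def image_sin_ratio f_def angle_side_density_def)
  finally show ?thesis
    by (simp add: f_def mult.commute)
qed

lemma nn_integral_angle_side_fst:
  fixes u :: "real \<times> real \<Rightarrow> ennreal"
  assumes u[measurable]: "u \<in> borel_measurable (lborel \<Otimes>\<^sub>M lborel)"
  shows "(\<integral>\<^sup>+\<alpha>. ennreal (angle_side_density \<alpha> b) * u (third_side \<alpha> b, b) \<partial>lborel)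
       = (\<integral>\<^sup>+a. ennreal (sides_density a b) * u (a, b) \<partial>lborel)"
proof (cases "0 < b")
  case False
  then have "angle_side_density \<alpha> b = 0" "sides_density a b = 0" for \<alpha> a
    by (auto simp: angle_side_density_def sides_density_def)
  then show ?thesis
    by simp
next
  case True
  define g' where "g' t = b * sin t / third_side t b" for t
  define f where "f a = u (a, b) * ennreal (sides_density a b)" for a
  have [measurable]: "f \<in> borel_measurable borel"
    unfolding f_def sides_density_def by measurable
  have "ennreal (angle_side_density t b) * u (third_side t b, b)
      = f (third_side t b) * ennreal (g' t) * indicator {0<..<pi} t" for t
  proof (cases "t \<in> {0<..<pi}")
    case True
    then show ?thesis
      using sides_density_third_side[of t b] \<open>0 < b\<close>
      by (simp add: f_def g'_def mult.assoc mult.commute[of "ennreal (angle_side_density t b)"])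
  qed (auto simp: angle_side_density_def)
  then have "(\<integral>\<^sup>+\<alpha>. ennreal (angle_side_density \<alpha> b) * u (third_side \<alpha> b, b) \<partial>lborel)
      = (\<integral>\<^sup>+t. f (third_side t b) * ennreal (g' t) * indicator {0<..<pi} t \<partial>lborel)"
    by simp
  also have "\<dots> = (\<integral>\<^sup>+a. f a * indicator ((\<lambda>t. third_side t b) ` {0<..<pi}) a \<partial>lborel)"
  proof (rule nn_integral_substitution_open)
    show "((\<lambda>t. third_side t b) has_real_derivative g' t) (at t)" if "t \<in> {0<..<pi}" for t
      unfolding g'_def using that has_real_derivative_third_side[of t b] by simp
    have "\<forall>t\<in>{0<..<pi}. third_side t b \<noteq> 0"
      using third_side_pos by (metis greaterThanLessThan_iff less_irrefl)
    then show "continuous_on {0<..<pi} g'"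
      unfolding g'_def third_side_def by (intro continuous_intros) auto
    show "0 \<le> g' t" if "t \<in> {0<..<pi}" for t
      using that True third_side_pos[of t b] sin_ge_zero[of t] by (simp add: g'_def)
  qed auto
  also have "\<dots> = (\<integral>\<^sup>+a. f a \<partial>lborel)"
    using True by (intro nn_integral_cong) (auto simp: image_third_side f_def sides_density_def)
  finally show ?thesis
    by (simp add: f_def mult.commute)
qed

lemma nn_integral_tri_sides:
  fixes u :: "real \<times> real \<Rightarrow> ennreal"
  assumes u[measurable]: "u \<in> borel_measurable (lborel \<Otimes>\<^sub>M lborel)"
  shows "(\<integral>\<^sup>+p. indicator triangle_angles p * u (case_prod tri_sides p) \<partial>(lborel \<Otimes>\<^sub>M lborel))
       = (\<integral>\<^sup>+p. ennreal (case_prod sides_density p) * u p \<partial>(lborel \<Otimes>\<^sub>M lborel))"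
proof -
  have "(\<integral>\<^sup>+p. indicator triangle_angles p * u (case_prod tri_sides p) \<partial>(lborel \<Otimes>\<^sub>M lborel))
      = (\<integral>\<^sup>+\<alpha>. \<integral>\<^sup>+\<beta>. indicator triangle_angles (\<alpha>, \<beta>) * u (tri_sides \<alpha> \<beta>) \<partial>lborel \<partial>lborel)"
    by (subst lborel.nn_integral_fst[symmetric]) simp_all
  also have "\<dots> = (\<integral>\<^sup>+\<alpha>. \<integral>\<^sup>+b. ennreal (angle_side_density \<alpha> b) * u (third_side \<alpha> b, b) \<partial>lborel \<partial>lborel)"
    using AE_lborel_singleton[of "pi / 2"]
    by (intro nn_integral_cong_AE) (auto elim!: eventually_mono simp: nn_integral_tri_sides_snd)
  also have "\<dots> = (\<integral>\<^sup>+b. \<integral>\<^sup>+\<alpha>. ennreal (angle_side_density \<alpha> b) * u (third_side \<alpha> b, b) \<partial>lborel \<partial>lborel)"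
    by (rule lborel_pair.Fubini'[symmetric]) measurable
  also have "\<dots> = (\<integral>\<^sup>+b. \<integral>\<^sup>+a. ennreal (sides_density a b) * u (a, b) \<partial>lborel \<partial>lborel)"
    by (simp add: nn_integral_angle_side_fst)
  also have "\<dots> = (\<integral>\<^sup>+a. \<integral>\<^sup>+b. ennreal (sides_density a b) * u (a, b) \<partial>lborel \<partial>lborel)"
    by (rule lborel_pair.Fubini') measurable
  also have "\<dots> = (\<integral>\<^sup>+p. ennreal (case_prod sides_density p) * u p \<partial>(lborel \<Otimes>\<^sub>M lborel))"
    by (subst lborel.nn_integral_fst[symmetric]) simp_all
  finally show ?thesis .
qed

lemma nn_integral_lborel_pair_reflect:
  fixes h :: "real \<times> real \<Rightarrow> ennreal"
  assumes [measurable]: "h \<in> borel_measurable (lborel \<Otimes>\<^sub>M lborel)"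
  shows "(\<integral>\<^sup>+p. h (c - snd p, c - fst p) \<partial>(lborel \<Otimes>\<^sub>M lborel)) = (\<integral>\<^sup>+p. h p \<partial>(lborel \<Otimes>\<^sub>M lborel))"
proof -
  have reflect: "(\<integral>\<^sup>+x. f (c - x) \<partial>lborel) = (\<integral>\<^sup>+x. f x \<partial>lborel)"
    if [measurable]: "f \<in> borel_measurable borel" for f :: "real \<Rightarrow> ennreal"
    using nn_integral_real_affine[OF that, of "-1" c] by simp
  have "(\<integral>\<^sup>+p. h (c - snd p, c - fst p) \<partial>(lborel \<Otimes>\<^sub>M lborel))
      = (\<integral>\<^sup>+x. \<integral>\<^sup>+y. h (c - y, c - x) \<partial>lborel \<partial>lborel)"
    by (subst lborel.nn_integral_fst[symmetric]) simp_all
  also have "\<dots> = (\<integral>\<^sup>+y. \<integral>\<^sup>+x. h (c - y, c - x) \<partial>lborel \<partial>lborel)"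
    by (rule lborel_pair.Fubini'[symmetric]) measurable
  also have "\<dots> = (\<integral>\<^sup>+y. \<integral>\<^sup>+x. h (c - y, x) \<partial>lborel \<partial>lborel)"
    by (intro nn_integral_cong reflect[where f = "\<lambda>x. h (c - _, x)", simplified]) measurable
  also have "\<dots> = (\<integral>\<^sup>+y. \<integral>\<^sup>+x. h (y, x) \<partial>lborel \<partial>lborel)"
    by (rule reflect[where f = "\<lambda>y. \<integral>\<^sup>+x. h (y, x) \<partial>lborel", simplified]) measurable
  also have "\<dots> = (\<integral>\<^sup>+p. h p \<partial>(lborel \<Otimes>\<^sub>M lborel))"
    by (subst lborel.nn_integral_fst[symmetric]) simp_all
  finally show ?thesis .
qed

lemma AE_uniform_angles_density_split:
  fixes u :: "real \<times> real \<Rightarrow> ennreal"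
  defines "h \<equiv> \<lambda>p. indicator triangle_angles p * u (case_prod tri_sides p)"
  shows "AE x in lborel. AE y in lborel.
    ennreal (indicator {0..pi} x / pi) * ennreal (indicator {0..pi} y / pi) * u (side_a x y, side_b x y)
    = ennreal (1 / pi\<^sup>2) * (h (x, y) + h (pi - y, pi - x))"
proof -
  have split: "ennreal (indicator {0..pi} x / pi) * ennreal (indicator {0..pi} y / pi) * u (side_a x y, side_b x y)
      = ennreal (1 / pi\<^sup>2) * (h (x, y) + h (pi - y, pi - x))"
    if "x \<noteq> 0" "x \<noteq> pi" "y \<noteq> 0" "y \<noteq> pi" "x + y \<noteq> pi" for x y
  proof (cases "x \<in> {0<..<pi} \<and> y \<in> {0<..<pi}")
    case True
    have "ennreal (1 / pi) * ennreal (1 / pi) = ennreal (1 / pi\<^sup>2)"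
      by (simp add: power2_eq_square flip: ennreal_mult)
    moreover have "(side_a x y, side_b x y) = (if x + y < pi then tri_sides x y else tri_sides (pi - y) (pi - x))"
      by (simp add: side_a_side_b_eq_tri_sides tri_angles_def)
    ultimately show ?thesis
      using True that by (auto simp: h_def triangle_angles_def)
  qed (use that in \<open>auto simp: h_def triangle_angles_def\<close>)
  have "AE x in lborel. AE y in lborel. x \<noteq> 0 \<and> x \<noteq> pi \<and> y \<noteq> 0 \<and> y \<noteq> pi \<and> x + y \<noteq> pi"
    using AE_lborel_singleton[of 0] AE_lborel_singleton[of pi]
  proof eventually_elim
    case (elim x)
    show ?case
      using AE_lborel_singleton[of 0] AE_lborel_singleton[of pi] AE_lborel_singleton[of "pi - x"]
      by eventually_elim (use elim in auto)
  qed
  then show ?thesis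
    by (elim eventually_mono) (auto elim: eventually_mono simp: split)
qed

lemma triangle_inequalities_iff:
  fixes a b :: real
  shows "(0 < a \<and> \<bar>1 - a\<bar> < b \<and> b < 1 + a) \<longleftrightarrow> (0 < b \<and> \<bar>1 - b\<bar> < a \<and> a < 1 + b)"
  by (auto simp: abs_if)

lemma ennreal_joint_density:
  "ennreal (joint_density a b) = ennreal (2 / pi\<^sup>2) * ennreal (sides_density a b)"
  by (subst ennreal_mult'[symmetric])
    (simp_all add: joint_density_def sides_density_def triangle_inequalities_iff[of a b] mult_ac)

lemma side_a_side_b_measurable[measurable]:
  "(\<lambda>p. (side_a (fst p) (snd p), side_b (fst p) (snd p))) \<in> (lborel \<Otimes>\<^sub>M lborel) \<rightarrow>\<^sub>M (lborel \<Otimes>\<^sub>M lborel)"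
  unfolding side_a_def side_b_def tri_C_def tri_angles_def by measurable

lemma nn_integral_uniform_angles_sides:
  fixes u :: "real \<times> real \<Rightarrow> ennreal"
  assumes u[measurable]: "u \<in> borel_measurable (lborel \<Otimes>\<^sub>M lborel)"
  shows "(\<integral>\<^sup>+p. ennreal (indicator {0..pi} (fst p) / pi) * ennreal (indicator {0..pi} (snd p) / pi)
              * u (side_a (fst p) (snd p), side_b (fst p) (snd p)) \<partial>(lborel \<Otimes>\<^sub>M lborel))
       = (\<integral>\<^sup>+p. ennreal (joint_density (fst p) (snd p)) * u p \<partial>(lborel \<Otimes>\<^sub>M lborel))"
proof -
  define h where "h p = indicator triangle_angles p * u (case_prod tri_sides p)" for p
  have [measurable]: "h \<in> borel_measurable (lborel \<Otimes>\<^sub>M lborel)"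
    unfolding h_def by measurable
  have "(\<integral>\<^sup>+p. ennreal (indicator {0..pi} (fst p) / pi) * ennreal (indicator {0..pi} (snd p) / pi)
              * u (side_a (fst p) (snd p), side_b (fst p) (snd p)) \<partial>(lborel \<Otimes>\<^sub>M lborel))
      = (\<integral>\<^sup>+x. \<integral>\<^sup>+y. ennreal (indicator {0..pi} x / pi) * ennreal (indicator {0..pi} y / pi)
              * u (side_a x y, side_b x y) \<partial>lborel \<partial>lborel)"
    by (subst lborel.nn_integral_fst[symmetric]) simp_all
  also have "\<dots> = (\<integral>\<^sup>+x. \<integral>\<^sup>+y. ennreal (1 / pi\<^sup>2) * (h (x, y) + h (pi - y, pi - x)) \<partial>lborel \<partial>lborel)"
    using AE_uniform_angles_density_split[of u]
    by (auto elim!: eventually_mono intro!: nn_integral_cong_AE simp: h_def)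
  also have "\<dots> = (\<integral>\<^sup>+p. ennreal (1 / pi\<^sup>2) * (h p + h (pi - snd p, pi - fst p)) \<partial>(lborel \<Otimes>\<^sub>M lborel))"
    by (subst lborel.nn_integral_fst[symmetric]) simp_all
  also have "\<dots> = ennreal (1 / pi\<^sup>2) * ((\<integral>\<^sup>+p. h p \<partial>(lborel \<Otimes>\<^sub>M lborel))
      + (\<integral>\<^sup>+p. h (pi - snd p, pi - fst p) \<partial>(lborel \<Otimes>\<^sub>M lborel)))"
    by (simp add: nn_integral_cmult nn_integral_add)
  also have "\<dots> = ennreal (2 / pi\<^sup>2) * (\<integral>\<^sup>+p. h p \<partial>(lborel \<Otimes>\<^sub>M lborel))"
    using ennreal_mult[of 2 "1 / pi\<^sup>2"] by (simp add: nn_integral_lborel_pair_reflect mult_ac flip: mult_2)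
  also have "\<dots> = ennreal (2 / pi\<^sup>2) * (\<integral>\<^sup>+p. ennreal (case_prod sides_density p) * u p \<partial>(lborel \<Otimes>\<^sub>M lborel))"
    by (simp add: h_def nn_integral_tri_sides)
  also have "\<dots> = (\<integral>\<^sup>+p. ennreal (2 / pi\<^sup>2) * (ennreal (case_prod sides_density p) * u p) \<partial>(lborel \<Otimes>\<^sub>M lborel))"
    by (rule nn_integral_cmult[symmetric]) measurable
  also have "\<dots> = (\<integral>\<^sup>+p. ennreal (joint_density (fst p) (snd p)) * u p \<partial>(lborel \<Otimes>\<^sub>M lborel))"
    by (intro nn_integral_cong) (simp add: ennreal_joint_density case_prod_beta mult.assoc)
  finally show ?thesis .
qed

lemma joint_density_measurable[measurable]:
  "(\<lambda>(x, y). ennreal (joint_density x y)) \<in> borel_measurable (lborel \<Otimes>\<^sub>M lborel)"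
  unfolding joint_density_def by measurable

lemma marginal_density_a_measurable[measurable]: "marginal_density_a \<in> borel_measurable borel"
  unfolding marginal_density_a_def by measurable

lemma nn_integral_joint_density_snd:
  "AE x in lborel. (\<integral>\<^sup>+y. ennreal (joint_density x y) \<partial>lborel) = ennreal (marginal_density_a x)"
  using AE_lborel_singleton[of 1]
proof eventually_elim
  case (elim x)
  show ?case
  proof (cases "0 < x")
    case False
    then show ?thesis
      by (simp add: joint_density_def marginal_density_a_def)
  next
    case True
    define C where "C = 2 / (pi\<^sup>2 * x)"
    have bounds: "0 < \<bar>1 - x\<bar>" "\<bar>1 - x\<bar> \<le> 1 + x"
      using True elim by auto
    have "(\<integral>\<^sup>+y. ennreal (joint_density x y) \<partial>lborel)
        = (\<integral>\<^sup>+y. ennreal (C / y) * indicator {\<bar>1 - x\<bar>..1 + x} y \<partial>lborel)"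
      using AE_lborel_singleton[of "\<bar>1 - x\<bar>"] AE_lborel_singleton[of "1 + x"]
      by (intro nn_integral_cong_AE, eventually_elim)
         (use True in \<open>auto simp: joint_density_def C_def indicator_def\<close>)
    also have "\<dots> = ennreal (C * ln (1 + x) - C * ln \<bar>1 - x\<bar>)"
      using bounds True
      by (intro nn_integral_FTC_Icc) (auto intro!: derivative_eq_intros simp: C_def)
    also have "\<dots> = ennreal (marginal_density_a x)"
      using True by (simp add: marginal_density_a_def C_def field_simps)
    finally show ?thesis .
  qed
qed

theorem mainTheorem17:
  fixes M :: "'a measure" and \<phi> \<psi> :: "'a \<Rightarrow> real"
  assumes "prob_space M"
    and "distributed M lborel \<phi> (\<lambda>x. ennreal (indicator {0..pi} x / pi))"
    and "distributed M lborel \<psi> (\<lambda>x. ennreal (indicator {0..pi} x / pi))"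
    and "prob_space.indep_var M borel \<phi> borel \<psi>"
  shows "distributed M (lborel \<Otimes>\<^sub>M lborel)
           (\<lambda>\<omega>. (side_a (\<phi> \<omega>) (\<psi> \<omega>), side_b (\<phi> \<omega>) (\<psi> \<omega>)))
           (\<lambda>(x, y). ennreal (joint_density x y))
       \<and> distributed M lborel (\<lambda>\<omega>. side_a (\<phi> \<omega>) (\<psi> \<omega>))
           (\<lambda>x. ennreal (marginal_density_a x))"
proof -
  interpret prob_space M by fact
  note lborel_sigma_finite = lborel.sigma_finite_measure_axioms
  have "indep_var lborel \<phi> lborel \<psi>"
    using assms(4) by (simp add: indep_var_eq)
  then have angles: "distributed M (lborel \<Otimes>\<^sub>M lborel) (\<lambda>\<omega>. (\<phi> \<omega>, \<psi> \<omega>))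
      (\<lambda>(x, y). ennreal (indicator {0..pi} x / pi) * ennreal (indicator {0..pi} y / pi))"
    by (intro distributed_joint_indep lborel_sigma_finite assms(2,3))
  have sides: "distributed M (lborel \<Otimes>\<^sub>M lborel)
      (\<lambda>\<omega>. (side_a (\<phi> \<omega>) (\<psi> \<omega>), side_b (\<phi> \<omega>) (\<psi> \<omega>))) (\<lambda>(x, y). ennreal (joint_density x y))"
    using distributed_comp_density[OF angles side_a_side_b_measurable joint_density_measurable]
      nn_integral_uniform_angles_sides[OF borel_measurable_indicator]
    by (simp add: case_prod_beta)
  have "distributed M lborel (\<lambda>\<omega>. side_a (\<phi> \<omega>) (\<psi> \<omega>)) (\<lambda>x. \<integral>\<^sup>+y. ennreal (joint_density x y) \<partial>lborel)"
    using distr_marginal1[OF lborel_sigma_finite lborel_sigma_finite sides] by simp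
  then have "distributed M lborel (\<lambda>\<omega>. side_a (\<phi> \<omega>) (\<psi> \<omega>)) (\<lambda>x. ennreal (marginal_density_a x))"
    by (rule distributed_cong_density[OF nn_integral_joint_density_snd, THEN iffD1, rotated 2]; measurable)
  with sides show ?thesis ..
qed

end
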